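(* Fix $F$ and $\phi$, and let $i$ be any individual with cost $\gamma_i$. If $k_i^*(t,F)=k_1^*(t,F)$ and $t'>t$, then $k_i^*(t',F)=k_1^*(t',F)$.
   Context: Costs $\gamma_i\in\mathbb{R}$ of compliance are distributed according to a continuously differentiable CDF $F$ with log-concave density $f$ of full support on $\mathbb{R}$. For $t\ge0$, define $k_0=k_0^*(t,F)$ and $k_1=k_1^*(t,F)$ implicitly by $k_0=t-\frac{F(k_0)}{f(k_0)}$ and $k_1=t+\frac{1-F(k_1)}{f(k_1)}$. Individual $i$'s optimal $k$ is $k_i^*(t,F)=k_1$ if $\gamma_i\le k_0F(k_0)+k_1(1-F(k_1))+t(F(k_1)-F(k_0))$, and $k_i^*(t,F)=k_0$ otherwise. *)

theory Defs
  imports "HOL-Analysis.Analysis"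
begin

definition log_concave :: "(real \<Rightarrow> real) \<Rightarrow> bool" where
  "log_concave f \<longleftrightarrow> (\<forall>x. 0 \<le> f x) \<and>
     (\<forall>x y u. 0 \<le> u \<and> u \<le> 1 \<longrightarrow>
        f x powr u * f y powr (1 - u) \<le> f (u * x + (1 - u) * y))"

definition admissible_cdf :: "(real \<Rightarrow> real) \<Rightarrow> bool" where
  "admissible_cdf F \<longleftrightarrow>
     mono F \<and> (F \<longlongrightarrow> 0) at_bot \<and> (F \<longlongrightarrow> 1) at_top \<and>
     (\<forall>x. F differentiable (at x)) \<and> continuous_on UNIV (deriv F) \<and>
     log_concave (deriv F) \<and> (\<forall>x. 0 < deriv F x)"

abbreviation dens :: "(real \<Rightarrow> real) \<Rightarrow> real \<Rightarrow> real" where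
  "dens F \<equiv> deriv F"

definition k0star :: "real \<Rightarrow> (real \<Rightarrow> real) \<Rightarrow> real" where
  "k0star t F = (THE k. k = t - F k / dens F k)"

definition k1star :: "real \<Rightarrow> (real \<Rightarrow> real) \<Rightarrow> real" where
  "k1star t F = (THE k. k = t + (1 - F k) / dens F k)"

definition threshold :: "real \<Rightarrow> (real \<Rightarrow> real) \<Rightarrow> real" where
  "threshold t F = (let k0 = k0star t F; k1 = k1star t F in
     k0 * F k0 + k1 * (1 - F k1) + t * (F k1 - F k0))"

definition kistar :: "real \<Rightarrow> real \<Rightarrow> (real \<Rightarrow> real) \<Rightarrow> real" where
  "kistar \<gamma> t F = (if \<gamma> \<le> threshold t F then k1star t F else k0star t F)"

end

theory Submission
  imports Defs
begin

text \<open>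
  Individual i chooses k1 exactly when gamma does not exceed the threshold
  T(t) = (k0 - t) F(k0) + (k1 - t) (1 - F(k1)) + t, so it suffices that T is nondecreasing.
  Log-concavity of f makes F/f nondecreasing and (1 - F)/f nonincreasing (Bagnoli--Bergstrom),
  so the virtual cost k + F(k)/f(k) and the virtual value k - (1 - F(k))/f(k) are strictly
  increasing; k0 and k1 are their unique solutions of "= t", and first-order conditions make k0 the
  minimiser of (k - t) F(k) and k1 the maximiser of (k - t) (1 - F(k)). Comparing T(a) with T(b)
  through these extremal properties gives T(a) \<le> T(b) whenever a \<le> b \<le> k1(a). Since
  k1(s) - s = (1 - F(k1(s)))/f(k1(s)) is bounded away from 0 for s \<le> b, finitely many such steps
  reach any b.
\<close>

lemma log_concave_reflect:
  assumes "log_concave f"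
  shows "log_concave (\<lambda>x. f (- x))"
  unfolding log_concave_def
proof (intro conjI allI impI)
  fix x y u :: real assume "0 \<le> u \<and> u \<le> 1"
  then have "f (- x) powr u * f (- y) powr (1 - u) \<le> f (u * - x + (1 - u) * - y)"
    using assms unfolding log_concave_def by blast
  then show "f (- x) powr u * f (- y) powr (1 - u) \<le> f (- (u * x + (1 - u) * y))"
    by (simp add: algebra_simps)
qed (use assms in \<open>simp add: log_concave_def\<close>)

lemma log_concave_shift_ratio_le:
  fixes f :: "real \<Rightarrow> real"
  assumes lc: "log_concave f" and pos: "\<And>x. 0 < f x" and "s \<le> x" and "0 < d"
  shows "f (x + d) * f s \<le> f (s + d) * f x"
proof -
  define u where "u = (x - s) / (x + d - s)"
  have u: "0 \<le> u" "u \<le> 1" "u * (x + d - s) = x - s"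
    using assms(3,4) by (auto simp: u_def field_simps)
  have lc_at: "f a powr v * f b powr (1 - v) \<le> f (v * a + (1 - v) * b)"
    if "0 \<le> v" "v \<le> 1" for a b v
    using lc that unfolding log_concave_def by blast
  have "u * s + (1 - u) * (x + d) = s + d" "(1 - u) * s + u * (x + d) = x"
    using u(3) by (simp_all add: algebra_simps)
  then have A: "f s powr u * f (x + d) powr (1 - u) \<le> f (s + d)"
    and B: "f s powr (1 - u) * f (x + d) powr u \<le> f x"
    using lc_at[of u s "x + d"] lc_at[of "1 - u" s "x + d"] u(1,2) by simp_all
  have "f (x + d) * f s = (f s powr u * f (x + d) powr (1 - u)) * (f s powr (1 - u) * f (x + d) powr u)"
    using pos[of s] pos[of "x + d"]
    by (simp add: powr_add[symmetric] algebra_simps)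
  also have "\<dots> \<le> f (s + d) * f x"
    by (rule mult_mono[OF A B]) (simp_all add: less_imp_le pos)
  finally show ?thesis .
qed

lemma log_concave_primitive_div_mono:
  fixes F f :: "real \<Rightarrow> real"
  assumes F_deriv: "\<And>x. (F has_real_derivative f x) (at x)"
    and lc: "log_concave f" and f_pos: "\<And>x. 0 < f x"
    and F_nonneg: "\<And>x. 0 \<le> F x" and F_at_bot: "(F \<longlongrightarrow> 0) at_bot"
    and "x \<le> y"
  shows "F x / f x \<le> F y / f y"
proof (cases "x = y")
  case False
  define d where "d = y - x"
  define r where "r = f y / f x"
  have d: "0 < d" and y: "y = x + d"
    using \<open>x \<le> y\<close> False by (auto simp: d_def)
  define H where "H s = F (s + d) - r * F s" for s
  \<comment> \<open>H is nondecreasing up to x and bounded below by a function tending to 0 at -\<infinity>\<close>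
  have H_deriv: "(H has_real_derivative f (s + d) - r * f s) (at s)" for s
    unfolding H_def
    using DERIV_shift[THEN iffD1, OF F_deriv] by (intro DERIV_diff DERIV_cmult F_deriv)
  \<comment> \<open>log-concavity says exactly that f(s + d) / f s is nonincreasing in s\<close>
  have "r * f s \<le> f (s + d)" if "s \<le> x" for s
    using log_concave_shift_ratio_le[OF lc f_pos that d] f_pos[of x]
    by (simp add: r_def y field_simps)
  then have H_le: "H s \<le> H x" if "s \<le> x" for s
    using that by (intro deriv_nonneg_imp_mono[OF H_deriv]) simp_all
  have "((\<lambda>s. - (r * F s)) \<longlongrightarrow> - (r * 0)) at_bot"
    by (intro tendsto_intros F_at_bot)
  moreover have "\<forall>\<^sub>F s in at_bot. - (r * F s) \<le> H x"
    unfolding eventually_at_bot_linorder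
    using H_le F_nonneg by (smt (verit) H_def)
  ultimately have "0 \<le> H x"
    by (simp add: tendsto_upperbound)
  then show ?thesis
    using f_pos[of x] f_pos[of y] by (simp add: H_def r_def y field_simps)
qed simp

lemma DERIV_sign_change_imp_min:
  fixes p p' :: "real \<Rightarrow> real"
  assumes "\<And>x. (p has_real_derivative p' x) (at x)"
    and "\<And>x. x \<le> c \<Longrightarrow> p' x \<le> 0" and "\<And>x. c \<le> x \<Longrightarrow> 0 \<le> p' x"
  shows "p c \<le> p k"
proof (cases "k \<le> c")
  case True
  then show ?thesis
    using assms by (intro deriv_nonpos_imp_antimono[of k c p p']) auto
next
  case False
  then show ?thesis
    using assms by (intro deriv_nonneg_imp_mono[of c k p p']) auto
qed

lemma strict_mono_continuous_ex1_eq: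
  fixes h :: "real \<Rightarrow> real"
  assumes "strict_mono h" and "\<And>x. isCont h x" and "h a \<le> t" and "t \<le> h b"
  shows "\<exists>!k. h k = t"
proof -
  have "a \<le> b"
  proof (rule ccontr)
    assume "\<not> a \<le> b"
    then have "h b < h a"
      using assms(1) by (simp add: strict_mono_less)
    with assms(3,4) show False by simp
  qed
  then obtain k where "h k = t"
    using IVT[of h a t b] assms(2-4) by blast
  then show ?thesis
    using strict_mono_eq[OF assms(1)] by metis
qed

lemma uniformly_locally_mono_imp_le:
  fixes f :: "real \<Rightarrow> 'a :: preorder"
  assumes "0 < e" and step: "\<And>x y. x \<le> y \<Longrightarrow> y \<le> b \<Longrightarrow> y \<le> x + e \<Longrightarrow> f x \<le> f y"
    and "a \<le> b"
  shows "f a \<le> f b"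
proof -
  obtain n :: nat where "b - a \<le> n * e"
    using real_arch_simple[of "(b - a) / e"] \<open>0 < e\<close> by (auto simp: field_simps)
  then show ?thesis
    using \<open>a \<le> b\<close>
  proof (induction n arbitrary: a)
    case 0
    then show ?case by simp
  next
    case (Suc n)
    show ?case
    proof (cases "b \<le> a + e")
      case True
      then show ?thesis using step Suc.prems by blast
    next
      case False
      then have "f a \<le> f (a + e)" and "f (a + e) \<le> f b"
        using step Suc \<open>0 < e\<close> by (auto simp: algebra_simps)
      then show ?thesis by (rule order_trans)
    qed
  qed
qed

lemma threshold_eq:
  "threshold t F = (k0star t F - t) * F (k0star t F) + (k1star t F - t) * (1 - F (k1star t F)) + t"
  unfolding threshold_def Let_def by (simp add: algebra_simps)

definition virtual_cost :: "(real \<Rightarrow> real) \<Rightarrow> real \<Rightarrow> real" where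
  "virtual_cost F k = k + F k / dens F k"

definition virtual_value :: "(real \<Rightarrow> real) \<Rightarrow> real \<Rightarrow> real" where
  "virtual_value F k = k - (1 - F k) / dens F k"

context
  fixes F :: "real \<Rightarrow> real"
  assumes adm: "admissible_cdf F"
begin

lemma DERIV_cdf: "(F has_real_derivative dens F x) (at x)"
  using adm by (simp add: admissible_cdf_def DERIV_deriv_iff_real_differentiable)

lemma dens_pos: "0 < dens F x"
  using adm by (simp add: admissible_cdf_def)

lemma log_concave_dens: "log_concave (dens F)"
  using adm by (simp add: admissible_cdf_def)

lemma isCont_dens: "isCont (dens F) x"
  using adm by (simp add: admissible_cdf_def continuous_on_eq_continuous_at)

lemma cdf_at_bot: "(F \<longlongrightarrow> 0) at_bot"
  and cdf_at_top: "(F \<longlongrightarrow> 1) at_top"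
  using adm by (simp_all add: admissible_cdf_def)

lemma strict_mono_cdf: "strict_mono F"
proof (rule strict_monoI)
  fix x y :: real assume "x < y"
  then show "F x < F y"
    by (rule DERIV_pos_imp_increasing) (use DERIV_cdf dens_pos in auto)
qed

lemma cdf_pos: "0 < F x"
proof -
  have "0 \<le> F (x - 1)"
    using cdf_at_bot strict_mono_cdf
    by (intro tendsto_upperbound[of F 0 at_bot])
      (auto simp: eventually_at_bot_linorder strict_mono_less_eq intro: exI[of _ "x - 1"])
  also have "\<dots> < F x"
    using strict_mono_cdf by (simp add: strict_mono_less)
  finally show ?thesis .
qed

lemma cdf_less_1: "F x < 1"
proof -
  have "F x < F (x + 1)"
    using strict_mono_cdf by (simp add: strict_mono_less)
  also have "\<dots> \<le> 1"
    using cdf_at_top strict_mono_cdf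
    by (intro tendsto_lowerbound[of F 1 at_top])
      (auto simp: eventually_at_top_linorder strict_mono_less_eq intro: exI[of _ "x + 1"])
  finally show ?thesis .
qed

lemma cdf_div_dens_mono: "x \<le> y \<Longrightarrow> F x / dens F x \<le> F y / dens F y"
  by (rule log_concave_primitive_div_mono[OF DERIV_cdf log_concave_dens dens_pos
        less_imp_le[OF cdf_pos] cdf_at_bot])

lemma ccdf_div_dens_antimono:
  assumes "x \<le> y"
  shows "(1 - F y) / dens F y \<le> (1 - F x) / dens F x"
proof -
  have "(1 - F (- (- y))) / dens F (- (- y)) \<le> (1 - F (- (- x))) / dens F (- (- x))"
  proof (rule log_concave_primitive_div_mono[where F = "\<lambda>z. 1 - F (- z)" and f = "\<lambda>z. dens F (- z)"])
    show "((\<lambda>z. 1 - F (- z)) has_real_derivative dens F (- z)) (at z)" for z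
      using DERIV_diff[OF DERIV_const DERIV_mirror[THEN iffD1, OF DERIV_cdf]] by simp
    show "log_concave (\<lambda>z. dens F (- z))"
      by (rule log_concave_reflect[OF log_concave_dens])
    show "((\<lambda>z. 1 - F (- z)) \<longlongrightarrow> 0) at_bot"
      using tendsto_diff[OF tendsto_const[of 1]
          filterlim_compose[OF cdf_at_top filterlim_uminus_at_top_at_bot]]
      by simp
  qed (use assms dens_pos cdf_less_1 less_imp_le in auto)
  then show ?thesis by simp
qed

lemma strict_mono_virtual_cost: "strict_mono (virtual_cost F)"
proof (rule strict_monoI)
  fix x y :: real assume "x < y"
  then show "virtual_cost F x < virtual_cost F y"
    using cdf_div_dens_mono[of x y] by (simp add: virtual_cost_def)
qed

lemma strict_mono_virtual_value: "strict_mono (virtual_value F)"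
proof (rule strict_monoI)
  fix x y :: real assume "x < y"
  then show "virtual_value F x < virtual_value F y"
    using ccdf_div_dens_antimono[of x y] by (simp add: virtual_value_def)
qed

lemma isCont_virtual_cost: "isCont (virtual_cost F) x"
  and isCont_virtual_value: "isCont (virtual_value F) x"
  unfolding virtual_cost_def virtual_value_def
  using dens_pos[of x] DERIV_isCont[OF DERIV_cdf] isCont_dens
  by (auto intro!: continuous_intros)

lemma virtual_cost_k0star: "virtual_cost F (k0star t F) = t"
proof -
  have ex1: "\<exists>!k. virtual_cost F k = t"
  proof (rule strict_mono_continuous_ex1_eq[OF strict_mono_virtual_cost isCont_virtual_cost])
    show "virtual_cost F (t - F t / dens F t) \<le> t"
      using cdf_div_dens_mono[of "t - F t / dens F t" t] cdf_pos[of t] dens_pos[of t]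
      by (simp add: virtual_cost_def)
    show "t \<le> virtual_cost F t"
      using cdf_pos[of t] dens_pos[of t] by (simp add: virtual_cost_def)
  qed
  have "k0star t F = (THE k. virtual_cost F k = t)"
    unfolding k0star_def virtual_cost_def by (simp add: eq_diff_eq)
  with theI'[OF ex1] show ?thesis
    by simp
qed

lemma virtual_value_k1star: "virtual_value F (k1star t F) = t"
proof -
  have ex1: "\<exists>!k. virtual_value F k = t"
  proof (rule strict_mono_continuous_ex1_eq[OF strict_mono_virtual_value isCont_virtual_value])
    show "t \<le> virtual_value F (t + (1 - F t) / dens F t)"
      using ccdf_div_dens_antimono[of t "t + (1 - F t) / dens F t"] cdf_less_1[of t] dens_pos[of t]
      by (simp add: virtual_value_def)
    show "virtual_value F t \<le> t"
      using cdf_less_1[of t] dens_pos[of t] by (simp add: virtual_value_def)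
  qed
  have "k1star t F = (THE k. virtual_value F k = t)"
    unfolding k1star_def virtual_value_def by (simp add: diff_eq_eq)
  with theI'[OF ex1] show ?thesis
    by simp
qed

lemma k0star_less: "k0star t F < t"
  using virtual_cost_k0star[of t] divide_pos_pos[OF cdf_pos dens_pos, of "k0star t F" "k0star t F"]
  unfolding virtual_cost_def by linarith

lemma less_k1star: "t < k1star t F"
  using virtual_value_k1star[of t] cdf_less_1[of "k1star t F"]
    divide_pos_pos[OF _ dens_pos, of "1 - F (k1star t F)" "k1star t F"]
  unfolding virtual_value_def by linarith

lemma k1star_mono: "s \<le> t \<Longrightarrow> k1star s F \<le> k1star t F"
  using strict_mono_less_eq[OF strict_mono_virtual_value, of "k1star s F" "k1star t F"]
  by (simp add: virtual_value_k1star)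

lemma k0star_minimizes: "(k0star t F - t) * F (k0star t F) \<le> (k - t) * F k"
proof (rule DERIV_sign_change_imp_min[where p = "\<lambda>k. (k - t) * F k"
      and p' = "\<lambda>x. dens F x * (virtual_cost F x - t)"])
  show "((\<lambda>k. (k - t) * F k) has_real_derivative dens F x * (virtual_cost F x - t)) (at x)" for x
    using dens_pos[of x]
    by (intro DERIV_cong[OF DERIV_mult'[OF DERIV_diff[OF DERIV_ident DERIV_const] DERIV_cdf]])
      (simp add: virtual_cost_def field_simps)
  show "dens F x * (virtual_cost F x - t) \<le> 0" if "x \<le> k0star t F" for x
    using strict_mono_less_eq[OF strict_mono_virtual_cost, of x "k0star t F"] that virtual_cost_k0star[of t]
      dens_pos[of x]
    by (simp add: mult_nonneg_nonpos)
  show "0 \<le> dens F x * (virtual_cost F x - t)" if "k0star t F \<le> x" for x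
    using strict_mono_less_eq[OF strict_mono_virtual_cost, of "k0star t F" x] that virtual_cost_k0star[of t]
      dens_pos[of x]
    by simp
qed

lemma k1star_maximizes: "(k - t) * (1 - F k) \<le> (k1star t F - t) * (1 - F (k1star t F))"
proof -
  have "- ((k1star t F - t) * (1 - F (k1star t F))) \<le> - ((k - t) * (1 - F k))"
  proof (rule DERIV_sign_change_imp_min[where p = "\<lambda>k. - ((k - t) * (1 - F k))"
        and p' = "\<lambda>x. dens F x * (virtual_value F x - t)"])
    show "((\<lambda>k. - ((k - t) * (1 - F k))) has_real_derivative dens F x * (virtual_value F x - t)) (at x)" for x
      using dens_pos[of x]
      by (intro DERIV_cong[OF DERIV_minus[OF DERIV_mult'[OF DERIV_diff[OF DERIV_ident DERIV_const]
            DERIV_diff[OF DERIV_const DERIV_cdf]]]])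
        (simp add: virtual_value_def field_simps)
    show "dens F x * (virtual_value F x - t) \<le> 0" if "x \<le> k1star t F" for x
      using strict_mono_less_eq[OF strict_mono_virtual_value, of x "k1star t F"] that virtual_value_k1star[of t]
        dens_pos[of x]
      by (simp add: mult_nonneg_nonpos)
    show "0 \<le> dens F x * (virtual_value F x - t)" if "k1star t F \<le> x" for x
      using strict_mono_less_eq[OF strict_mono_virtual_value, of "k1star t F" x] that virtual_value_k1star[of t]
        dens_pos[of x]
      by simp
  qed
  then show ?thesis by simp
qed

text \<open>k0star b F competes for the minimum at a and k1star a F for the maximum at b; the two
  comparisons differ by (b - a) * (F (k1star a F) - F (k0star b F)), which is nonnegative because
  k0star b F < b \<le> k1star a F.\<close>
lemma threshold_le_step:
  assumes "a \<le> b" and "b \<le> k1star a F"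
  shows "threshold a F \<le> threshold b F"
proof -
  have "k0star b F \<le> k1star a F"
    using k0star_less[of b] assms(2) by simp
  then have "F (k0star b F) \<le> F (k1star a F)"
    using strict_mono_less_eq[OF strict_mono_cdf] by blast
  then have "0 \<le> (b - a) * (F (k1star a F) - F (k0star b F))"
    using assms(1) by simp
  then show ?thesis
    using k0star_minimizes[of a "k0star b F"] k1star_maximizes[of "k1star a F" b]
    unfolding threshold_eq by (simp add: algebra_simps)
qed

lemma threshold_mono:
  assumes "a \<le> b"
  shows "threshold a F \<le> threshold b F"
proof (rule uniformly_locally_mono_imp_le[OF _ _ assms])
  let ?e = "(1 - F (k1star b F)) / dens F (k1star b F)"
  show "0 < ?e"
    using cdf_less_1 dens_pos by simp
  \<comment> \<open>k1star s F - s is the inverse hazard rate at k1star s F, which can only grow as s decreases\<close>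
  have gap: "s + ?e \<le> k1star s F" if "s \<le> b" for s
    using ccdf_div_dens_antimono[OF k1star_mono[OF that]] virtual_value_k1star[of s]
    by (simp add: virtual_value_def)
  then show "threshold x F \<le> threshold y F" if "x \<le> y" "y \<le> b" "y \<le> x + ?e" for x y
    using gap[of x] that by (intro threshold_le_step) linarith+
qed

end

theorem proposition6:
  fixes F :: "real \<Rightarrow> real" and \<gamma> t t' :: real
  assumes "admissible_cdf F"
    and "0 \<le> t"
    and "kistar \<gamma> t F = k1star t F"
    and "t' > t"
  shows "kistar \<gamma> t' F = k1star t' F"
proof -
  have "k0star t F \<noteq> k1star t F"
    using k0star_less[OF assms(1), of t] less_k1star[OF assms(1), of t] by linarith
  then have "\<gamma> \<le> threshold t F"
    using assms(3) by (auto simp: kistar_def split: if_splits)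
  also have "\<dots> \<le> threshold t' F"
    using threshold_mono[OF assms(1)] assms(4) by simp
  finally show ?thesis
    by (simp add: kistar_def)
qed

end
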